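(* For every $n\in\mathbb Z$, the vector field $S^{(n)}=\partial_{f_{1-n}}$ is given by $$S^{(n)}=\sum_{m\ge1}\Big((n+m)\varphi^{(n+m)}+\sum_{k=0}^{n+1}A_0^{(k,m)}A_2^{(-k-1,n)}\Big)\frac{\partial}{\partial\varphi^{(m)}},$$ where the inner sum is empty if $n+1<0$.
   Context: Let $\varphi^{(1)},\varphi^{(2)},\dots$ be independent variables, set $\varphi^{(-1)}=1$, $\varphi^{(0)}=0$ and $\varphi^{(j)}=0$ for $j\le-2$, and let $\varphi(\lambda)=\sum_{k\ge-1}\varphi^{(k)}\lambda^k=1/\lambda+\sum_{k\ge1}\varphi^{(k)}\lambda^k$, $\varphi'=d\varphi/d\lambda$. For integers $k$ (possibly negative) and $r\ge0$, $A_r^{(k,n)}=[\lambda^{n-r}](\varphi^k\varphi'^r)$ denotes the coefficient of $\lambda^{n-r}$ in the Laurent series $\varphi^k\varphi'^r$. Notation $\mathfrak P_\varphi$: with $w=1/\varphi(\lambda)=\lambda+O(\lambda^3)$, any Laurent series $F$ in $\lambda$ with finitely many negative powers is uniquely $F=\sum_{k\le m}c_k\varphi(\lambda)^k$ with $c_k$ independent of $\lambda$; $\mathfrak P_\varphi F=F-\sum_{k=0}^mc_k\varphi(\lambda)^k$ (a power series in $\lambda$ without constant term). $f_n=\mathfrak P_\varphi(\lambda^n\varphi')$. For $f=\sum_{i\ge1}f^{(i)}\lambda^i$, $\partial_f=\sum_{i\ge1}f^{(i)}\partial/\partial\varphi^{(i)}$. *)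

theory Defs
  imports "HOL-Computational_Algebra.Formal_Laurent_Series"
begin

unbundle fps_syntax

text \<open>The variables phi^(1), phi^(2), ... are given by an arbitrary sequence c
  (c k = phi^(k) for k \<ge> 1; c 0 is ignored) with values in a field of
  characteristic 0.  The coefficient phi^(j) for an arbitrary integer j:\<close>
definition phi_coeff :: "(nat \<Rightarrow> 'a::field_char_0) \<Rightarrow> int \<Rightarrow> 'a" where
  "phi_coeff c j = (if j = -1 then 1 else if j \<ge> 1 then c (nat j) else 0)"

definition phi :: "(nat \<Rightarrow> 'a::field_char_0) \<Rightarrow> 'a fls" where
  "phi c = fls_X_inv + fps_to_fls (Abs_fps (\<lambda>k. if k = 0 then 0 else c k))"

definition dphi :: "(nat \<Rightarrow> 'a::field_char_0) \<Rightarrow> 'a fls" where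
  "dphi c = fls_deriv (phi c)"

definition A_coeff :: "(nat \<Rightarrow> 'a::field_char_0) \<Rightarrow> nat \<Rightarrow> int \<Rightarrow> int \<Rightarrow> 'a" where
  "A_coeff c r k n = ((phi c) powi k * (dphi c) ^ r) $$ (n - int r)"

definition P_phi :: "(nat \<Rightarrow> 'a::field_char_0) \<Rightarrow> 'a fls \<Rightarrow> 'a fls" where
  "P_phi c F = (THE G. (\<forall>j\<le>0. G $$ j = 0) \<and>
      (\<exists>(M::nat) (d::nat \<Rightarrow> 'a). F - G = (\<Sum>k\<le>M. fls_const (d k) * (phi c) ^ k)))"

definition f_field :: "(nat \<Rightarrow> 'a::field_char_0) \<Rightarrow> int \<Rightarrow> 'a fls" where
  "f_field c n = P_phi c (fls_X_intpow n * dphi c)"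

end

theory Submission
  imports Defs
begin

unbundle fps_syntax

text \<open>Under the residue pairing the series psi_i = - phi^(-i-1) phi' are dual to the powers
  phi^k: phi^j phi' is the derivative of phi^(j+1)/(j+1) unless j = -1, and Res(phi'/phi) is the
  order -1 of phi.  A power series without constant term pairs to zero with every psi_i, so the
  polynomial in phi removed by P_phi is the sum of Res(F psi_k) phi^k.  For F = lambda^(1-n) phi'
  one has Res(F psi_k) = - A_2^(-k-1,n), which vanishes for k > n+1 by counting orders, and the
  coefficient of lambda^m gives the formula.\<close>

lemma fls_deriv_power_int:
  fixes f :: "'a::field fls"
  shows "fls_deriv (f powi i) = of_int i * f powi (i - 1) * fls_deriv f"
proof (cases "f = 0")
  case True
  then show ?thesis by (simp add: power_int_0_left_if)
next
  case False
  show ?thesis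
  proof (cases "i \<ge> 0")
    case True
    then obtain n where n: "i = int n" by (metis nonneg_eq_int)
    show ?thesis
    proof (cases n)
      case (Suc k)
      have "f powi i = f ^ Suc k"
        by (simp only: n Suc power_int_of_nat)
      moreover have "f powi (i - 1) = f ^ k" "of_int i = (of_nat (Suc k) :: 'a fls)"
        using n Suc by simp_all
      ultimately show ?thesis by (simp only: fls_deriv_power diff_Suc_1)
    qed (simp add: n)
  next
    case False
    define n where "n = nat (- i - 1)"
    have n: "i = - int (Suc n)"
      using False unfolding n_def by simp
    have "fls_deriv (f powi i) = fls_deriv (inverse f ^ Suc n)"
      by (simp only: n power_int_minus power_int_of_nat power_inverse)
    also have "\<dots> = of_nat (Suc n) * inverse f ^ n * (- fls_deriv f * (inverse f)\<^sup>2)"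
      by (simp only: fls_deriv_power diff_Suc_1 fls_inverse_deriv)
    also have "\<dots> = of_int i * f powi (i - 1) * fls_deriv f"
      using \<open>f \<noteq> 0\<close> by (simp add: n power_int_def nat_add_distrib field_simps power2_eq_square
          flip: power_Suc)
    finally show ?thesis .
  qed
qed

lemma fls_residue_power_int_times_deriv:
  fixes f :: "'a::field_char_0 fls"
  assumes "f \<noteq> 0"
  shows "fls_residue (f powi i * fls_deriv f) = (if i = -1 then of_int (fls_subdegree f) else 0)"
proof (cases "i = -1")
  case True
  then show ?thesis
    using fls_residue_deriv_times_inverse_eq_subdegree(2)[of f] by (simp add: power_int_def)
next
  case False
  have "of_int (i + 1) * fls_residue (f powi i * fls_deriv f) = fls_residue (fls_deriv (f powi (i + 1)))"
    by (simp only: fls_deriv_power_int fls_residue_of_int_times mult.assoc add_diff_cancel)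
  also have "\<dots> = 0"
    by (rule fls_residue_deriv)
  moreover have "of_int (i + 1) \<noteq> (0::'a)"
    using False by (simp only: of_int_eq_0_iff)
  ultimately show ?thesis
    using False by (simp del: fls_residue_def)
qed

lemma sum_atLeastAtMost_int_eq_sum_atMost:
  fixes g :: "int \<Rightarrow> 'b::comm_monoid_add"
  assumes "b \<le> int N" and "\<And>k. b < int k \<Longrightarrow> g (int k) = 0"
  shows "(\<Sum>k\<in>{0..b}. g k) = (\<Sum>k\<le>N. g (int k))"
proof -
  have "(\<Sum>k\<in>{0..b}. g k) = (\<Sum>k\<in>{k. int k \<le> b}. g (int k))"
    by (rule sum.reindex_bij_witness[of _ int nat]) auto
  also have "\<dots> = (\<Sum>k\<le>N. g (int k))"
    by (rule sum.mono_neutral_left) (use assms in auto)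
  finally show ?thesis .
qed

lemma fls_nth_phi [simp]: "phi c $$ j = phi_coeff c j"
  unfolding phi_def phi_coeff_def by (auto simp: fls_X_inv_nth)

lemma fls_nth_dphi: "dphi c $$ j = of_int (j + 1) * phi_coeff c (j + 1)"
  unfolding dphi_def by simp

lemma fls_subdegree_phi [simp]: "fls_subdegree (phi c) = -1"
  by (rule fls_subdegree_eqI) (auto simp: phi_coeff_def)

lemma phi_nonzero [simp]: "phi c \<noteq> 0"
  by (rule fls_nonzeroI[of _ "-1"]) (simp add: phi_coeff_def)

lemma fls_subdegree_dphi [simp]: "fls_subdegree (dphi c) = -2"
  by (rule fls_subdegree_eqI) (auto simp: fls_nth_dphi phi_coeff_def)

lemma dphi_nonzero [simp]: "dphi c \<noteq> 0"
  by (rule fls_nonzeroI[of _ "-2"]) (simp add: fls_nth_dphi phi_coeff_def)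

lemma fls_subdegree_phi_power [simp]: "fls_subdegree (phi c ^ k) = - int k"
  by (simp add: fls_subdegree_pow)

lemma fls_nth_phi_power_subdegree: "(phi c ^ k) $$ (- int k) = 1"
  using fls_pow_base[of "phi c" k] by (simp add: phi_coeff_def)

definition phi_dual :: "(nat \<Rightarrow> 'a::field_char_0) \<Rightarrow> nat \<Rightarrow> 'a fls" where
  "phi_dual c i = - (phi c powi (- int i - 1) * dphi c)"

lemma fls_subdegree_phi_dual: "fls_subdegree (phi_dual c i) = int i - 1"
  by (simp add: phi_dual_def)

lemma fls_residue_phi_power_times_dual:
  "fls_residue (phi c ^ k * phi_dual c i) = (if k = i then 1 else 0)"
proof -
  have "phi c ^ k * phi c powi (- int i - 1) = phi c powi (int k - int i - 1)"
    using power_int_add[of "phi c" "int k" "- int i - 1"] by (simp add: algebra_simps)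
  then have "fls_residue (phi c ^ k * phi_dual c i)
      = - fls_residue (phi c powi (int k - int i - 1) * fls_deriv (phi c))"
    by (simp add: phi_dual_def dphi_def flip: mult.assoc)
  also have "\<dots> = (if k = i then 1 else 0)"
    using fls_residue_power_int_times_deriv[OF phi_nonzero, where i = "int k - int i - 1", of c]
    by simp
  finally show ?thesis .
qed

lemma fls_residue_times_phi_dual_eq_0:
  assumes "\<And>j. j \<le> - int i \<Longrightarrow> F $$ j = 0"
  shows "fls_residue (F * phi_dual c i) = 0"
proof (cases "F = 0")
  case False
  then have "1 - int i \<le> fls_subdegree F"
    by (rule fls_subdegree_geI) (simp add: assms)
  then show ?thesis
    by (simp add: fls_times_nth_eq0 fls_subdegree_phi_dual)
qed simp

lemma fls_residue_phi_poly_times_dual: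
  "fls_residue ((\<Sum>k\<le>M. fls_const (d k) * phi c ^ k) * phi_dual c i) = (if i \<le> M then d i else 0)"
proof -
  have "fls_residue ((\<Sum>k\<le>M. fls_const (d k) * phi c ^ k) * phi_dual c i)
      = (\<Sum>k\<le>M. d k * fls_residue (phi c ^ k * phi_dual c i))"
    by (simp only: fls_residue_def sum_distrib_right mult.assoc fls_nth_sum fls_mult_const_nth)
  also have "\<dots> = (\<Sum>k\<le>M. if k = i then d i else 0)"
    by (intro sum.cong) (simp_all add: fls_residue_phi_power_times_dual del: fls_residue_def)
  finally show ?thesis
    by simp
qed

lemma phi_poly_principal_part_exists:
  assumes "fls_subdegree F \<ge> - int N"
  shows "\<exists>d. \<forall>j\<le>0. (F - (\<Sum>k\<le>N. fls_const (d k) * phi c ^ k)) $$ j = 0"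
  using assms
proof (induction N arbitrary: F)
  case 0
  show ?case
  proof (intro exI[of _ "\<lambda>_. F $$ 0"] allI impI)
    fix j :: int
    assume "j \<le> 0"
    show "(F - (\<Sum>k\<le>0. fls_const (F $$ 0) * phi c ^ k)) $$ j = 0"
    proof (cases "j = 0")
      case False
      with 0 \<open>j \<le> 0\<close> have "j < fls_subdegree F"
        by linarith
      then show ?thesis
        by simp
    qed simp
  qed
next
  case (Suc N)
  define a where "a = F $$ (- int (Suc N))"
  define F' where "F' = F - fls_const a * phi c ^ Suc N"
  have "fls_subdegree F' \<ge> - int N"
  proof (cases "F' = 0")
    case False
    then show ?thesis
    proof (rule fls_subdegree_geI)
      fix j assume "j < - int N"
      then consider (lowest) "j = - int (Suc N)" | (below) "j < - int (Suc N)"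
        by linarith
      then show "F' $$ j = 0"
      proof cases
        case lowest
        then show ?thesis
          unfolding lowest F'_def a_def fls_minus_nth fls_mult_const_nth fls_nth_phi_power_subdegree
          by simp
      next
        case below
        then show ?thesis
          using Suc.prems by (simp add: F'_def)
      qed
    qed
  qed simp
  then obtain d where d: "\<forall>j\<le>0. (F' - (\<Sum>k\<le>N. fls_const (d k) * phi c ^ k)) $$ j = 0"
    using Suc.IH by blast
  have "F - (\<Sum>k\<le>Suc N. fls_const ((d(Suc N := a)) k) * phi c ^ k)
      = F' - (\<Sum>k\<le>N. fls_const (d k) * phi c ^ k)"
    by (simp add: F'_def sum.atMost_Suc algebra_simps)
  with d show ?case
    by metis
qed

lemma phi_remainder_eq:
  assumes G: "\<forall>j\<le>0. G $$ j = 0"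
    and FG: "F - G = (\<Sum>k\<le>M. fls_const (d k) * phi c ^ k)"
    and F: "fls_subdegree F \<ge> - int N"
  shows "G = F - (\<Sum>k\<le>N. fls_const (fls_residue (F * phi_dual c k)) * phi c ^ k)"
proof -
  have res: "fls_residue (F * phi_dual c k) = (if k \<le> M then d k else 0)" for k
  proof -
    have "F * phi_dual c k = G * phi_dual c k + (\<Sum>k\<le>M. fls_const (d k) * phi c ^ k) * phi_dual c k"
      by (simp flip: FG distrib_right)
    moreover have "fls_residue (G * phi_dual c k) = 0"
      by (rule fls_residue_times_phi_dual_eq_0) (simp add: G)
    ultimately show ?thesis
      by (simp only: fls_residue_add fls_residue_phi_poly_times_dual add_0)
  qed
  have res_vanish: "fls_residue (F * phi_dual c k) = 0" if "N < k" for k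
    by (rule fls_residue_times_phi_dual_eq_0) (use F that in simp)
  define a where "a k = fls_const (fls_residue (F * phi_dual c k)) * phi c ^ k" for k
  have "(\<Sum>k\<le>M. fls_const (d k) * phi c ^ k) = (\<Sum>k\<le>max M N. a k)"
    by (rule sum.mono_neutral_cong_left) (auto simp: a_def res simp del: fls_residue_def)
  also have "\<dots> = (\<Sum>k\<le>N. a k)"
    by (rule sum.mono_neutral_right) (auto simp: a_def res_vanish simp del: fls_residue_def)
  finally show ?thesis
    using FG by (simp add: a_def algebra_simps)
qed

lemma P_phi_eq:
  assumes "fls_subdegree F \<ge> - int N"
  shows "P_phi c F = F - (\<Sum>k\<le>N. fls_const (fls_residue (F * phi_dual c k)) * phi c ^ k)"
    (is "_ = ?G")
  unfolding P_phi_def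
proof (rule the_equality)
  obtain d where d: "\<forall>j\<le>0. (F - (\<Sum>k\<le>N. fls_const (d k) * phi c ^ k)) $$ j = 0"
    using phi_poly_principal_part_exists[OF assms] by blast
  moreover have "F - (\<Sum>k\<le>N. fls_const (d k) * phi c ^ k) = ?G"
    by (rule phi_remainder_eq[OF d _ assms]) simp
  ultimately show "(\<forall>j\<le>0. ?G $$ j = 0) \<and>
      (\<exists>(M::nat) d. F - ?G = (\<Sum>k\<le>M. fls_const (d k) * phi c ^ k))"
    by auto
next
  fix G
  assume "(\<forall>j\<le>0. G $$ j = 0) \<and>
      (\<exists>(M::nat) d. F - G = (\<Sum>k\<le>M. fls_const (d k) * phi c ^ k))"
  then obtain M d where "\<forall>j\<le>0. G $$ j = 0" "F - G = (\<Sum>k\<le>M. fls_const (d k) * phi c ^ k)"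
    by blast
  then show "G = ?G"
    using assms by (rule phi_remainder_eq)
qed

lemma fls_nth_X_intpow_times_dphi:
  "(fls_X_intpow (1 - n) * dphi c) $$ m = of_int (n + m) * phi_coeff c (n + m)"
proof -
  have "m + - (1 - n) + 1 = n + m"
    by simp
  then show ?thesis
    by (simp only: fls_X_intpow_times_conv_shift fls_shift_nth fls_nth_dphi)
qed

lemma fls_subdegree_X_intpow_times_dphi: "fls_subdegree (fls_X_intpow (1 - n) * dphi c) = - 1 - n"
proof -
  have "fls_subdegree (fls_X_intpow (1 - n) * dphi c) = fls_subdegree (dphi c) + (1 - n)"
    by (rule fls_subdegree_mult_fls_X_intpow) simp
  then show ?thesis
    by simp
qed

lemma fls_residue_X_intpow_dphi_times_dual:
  "fls_residue (fls_X_intpow (1 - n) * dphi c * phi_dual c k) = - A_coeff c 2 (- int k - 1) n"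
proof -
  have "fls_X_intpow (1 - n) * dphi c * phi_dual c k
      = - (fls_X_intpow (1 - n) * (phi c powi (- int k - 1) * dphi c ^ 2))"
    by (simp add: phi_dual_def power2_eq_square mult_ac)
  moreover have "-1 + - (1 - n) = n - int 2"
    by simp
  ultimately show ?thesis
    by (simp only: fls_residue_def A_coeff_def fls_X_intpow_times_conv_shift fls_shift_nth
        fls_uminus_nth)
qed

lemma f_field_eq:
  "f_field c (1 - n) = fls_X_intpow (1 - n) * dphi c
     + (\<Sum>k\<le>nat (n + 1). fls_const (A_coeff c 2 (- int k - 1) n) * phi c ^ k)"
proof -
  have "fls_subdegree (fls_X_intpow (1 - n) * dphi c) \<ge> - int (nat (n + 1))"
    unfolding fls_subdegree_X_intpow_times_dphi by simp
  then have "f_field c (1 - n) = fls_X_intpow (1 - n) * dphi c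
      - (\<Sum>k\<le>nat (n + 1). fls_const (fls_residue (fls_X_intpow (1 - n) * dphi c * phi_dual c k))
          * phi c ^ k)"
    unfolding f_field_def by (rule P_phi_eq)
  then show ?thesis
    by (simp only: fls_residue_X_intpow_dphi_times_dual fls_const_uminus mult_minus_left
        sum_negf diff_minus_eq_add)
qed

lemma A_coeff_0_of_nat: "A_coeff c 0 (int k) m = (phi c ^ k) $$ m"
  by (simp add: A_coeff_def)

lemma A_coeff_2_eq_0:
  assumes "n + 1 < int k"
  shows "A_coeff c 2 (- int k - 1) n = 0"
proof -
  have "fls_subdegree (phi c powi (- int k - 1) * dphi c ^ 2) = int k - 3"
    by (simp add: fls_subdegree_pow)
  then show ?thesis
    using assms by (simp add: A_coeff_def)
qed

theorem mainTheorem15: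
  fixes c :: "nat \<Rightarrow> 'a::field_char_0" and n m :: int
  assumes "m \<ge> 1"
  shows "f_field c (1 - n) $$ m =
    of_int (n + m) * phi_coeff c (n + m)
    + (\<Sum>k\<in>{0..n+1}. A_coeff c 0 k m * A_coeff c 2 (-k-1) n)"
proof -
  have "f_field c (1 - n) $$ m = of_int (n + m) * phi_coeff c (n + m)
      + (\<Sum>k\<le>nat (n + 1). A_coeff c 2 (- int k - 1) n * (phi c ^ k) $$ m)"
    by (simp only: f_field_eq fls_plus_nth fls_nth_X_intpow_times_dphi fls_nth_sum
        fls_mult_const_nth)
  also have "(\<Sum>k\<le>nat (n + 1). A_coeff c 2 (- int k - 1) n * (phi c ^ k) $$ m)
      = (\<Sum>k\<le>nat (n + 1). A_coeff c 0 (int k) m * A_coeff c 2 (- int k - 1) n)"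
    by (simp only: A_coeff_0_of_nat mult.commute)
  also have "\<dots> = (\<Sum>k\<in>{0..n+1}. A_coeff c 0 k m * A_coeff c 2 (-k-1) n)"
    by (rule sum_atLeastAtMost_int_eq_sum_atMost
        [where g = "\<lambda>k. A_coeff c 0 k m * A_coeff c 2 (-k-1) n", symmetric])
      (simp_all add: A_coeff_2_eq_0)
  finally show ?thesis .
qed

end
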